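(* Let $n$ be even, $k\ge2$, and let $f(x)=a_0(x)+2a_1(x)+\cdots+2^{k-2}a_{k-2}(x)+2^{k-1}a_{k-1}(x)$ from $\mathbb{V}_n$ to $\mathbb{Z}_{2^k}$ be gbent, with Boolean $a_i$. Then the dual $f^*$ of $f$ is $$f^*(x)=b_0(x)+2b_1(x)+\cdots+2^{k-2}b_{k-2}(x)+2^{k-1}b_{k-1}(x),$$ where $b_{k-1}=a_{k-1}^*$ and $b_j=a_{k-1}^*\oplus(a_{k-1}\oplus a_j)^*$ for $j=0,\ldots,k-2$.
   Context: $\mathbb{V}_n$ is an $n$-dimensional $\mathbb{F}_2$-vector space with inner product $u\cdot x$. $f$ is gbent if $\mathcal{H}_f(u)=\sum_x\zeta_{2^k}^{f(x)}(-1)^{u\cdot x}$ ($\zeta_{2^k}=e^{2\pi i/2^k}$) has absolute value $2^{n/2}$ for all $u$. For even $n$ and gbent $f$, one has $\mathcal{H}_f(u)=2^{n/2}\zeta_{2^k}^{f^*(u)}$ for a unique function $f^*:\mathbb{V}_n\to\mathbb{Z}_{2^k}$, called the dual of $f$. For a bent Boolean function $g$ (i.e. $|\mathcal{W}_g(u)|=2^{n/2}$ where $\mathcal{W}_g(u)=\sum_x(-1)^{g(x)\oplus u\cdot x}$), its dual $g^*$ is defined by $\mathcal{W}_g(u)=2^{n/2}(-1)^{g^*(u)}$; the functions $a_{k-1}$ and $a_{k-1}\oplus a_j$ are bent when $f$ is gbent. *)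

theory Defs
  imports Complex_Main
begin

text \<open>V_n is modelled as the set of Boolean lists of length n; the inner product
  u . x is the parity of the number of positions where both are True.\<close>

definition Vn :: "nat \<Rightarrow> bool list set" where
  "Vn n = {xs. length xs = n}"

definition ip :: "nat \<Rightarrow> bool list \<Rightarrow> bool list \<Rightarrow> nat" where
  "ip n u x = card {i. i < n \<and> u ! i \<and> x ! i}"

definition zeta :: "nat \<Rightarrow> complex" where
  "zeta k = cis (2 * pi / 2 ^ k)"

text \<open>Generalized Walsh-Hadamard transform of f : V_n -> Z_{2^k} (values as nat, used modulo 2^k).\<close>
definition gH :: "nat \<Rightarrow> nat \<Rightarrow> (bool list \<Rightarrow> nat) \<Rightarrow> bool list \<Rightarrow> complex" where
  "gH n k f u = (\<Sum>x\<in>Vn n. zeta k ^ f x * (-1) ^ ip n u x)"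

definition gbent :: "nat \<Rightarrow> nat \<Rightarrow> (bool list \<Rightarrow> nat) \<Rightarrow> bool" where
  "gbent n k f \<longleftrightarrow> (\<forall>u\<in>Vn n. cmod (gH n k f u) = sqrt (2 ^ n))"

definition gdual :: "nat \<Rightarrow> nat \<Rightarrow> (bool list \<Rightarrow> nat) \<Rightarrow> bool list \<Rightarrow> nat" where
  "gdual n k f u = (THE c. c < 2 ^ k \<and> gH n k f u = complex_of_real (sqrt (2 ^ n)) * zeta k ^ c)"

definition walsh :: "nat \<Rightarrow> (bool list \<Rightarrow> bool) \<Rightarrow> bool list \<Rightarrow> real" where
  "walsh n g u = (\<Sum>x\<in>Vn n. (-1) ^ (of_bool (g x) + ip n u x))"

definition bent :: "nat \<Rightarrow> (bool list \<Rightarrow> bool) \<Rightarrow> bool" where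
  "bent n g \<longleftrightarrow> (\<forall>u\<in>Vn n. \<bar>walsh n g u\<bar> = sqrt (2 ^ n))"

definition bdual :: "nat \<Rightarrow> (bool list \<Rightarrow> bool) \<Rightarrow> bool list \<Rightarrow> bool" where
  "bdual n g u = (THE b. walsh n g u = sqrt (2 ^ n) * (-1) ^ of_bool b)"

end

theory Submission
  imports Defs "HOL-Computational_Algebra.Polynomial"
begin

text \<open>
  Write N = 2^(k-1) and \<zeta> = zeta k. Since X^N + 1 is irreducible over \<int> (Eisenstein at 2 after
  the shift X \<mapsto> X - 1), the powers 1, \<zeta>, ..., \<zeta>^(N-1) are linearly independent over \<int> and
  span the ring \<int>[\<zeta>]. In \<int>[\<zeta>] the element \<pi> = 1 - \<zeta> has residue field F_2 and
  2 = \<pi>^N * unit, so an element z with z * cnj z = 2^(2h) is divisible by \<pi>^(hN), i.e. z = 2^h w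
  with w * cnj w = 1; comparing constant coefficients in w * cnj w gives w = \<plusminus>\<zeta>^s.

  Hence H_f(u) = 2^h \<zeta>^c with c = f*(u), and this pins down the coefficients of H_f(u) in the
  basis 1, ..., \<zeta>^(N-1). Any sum of (-1)^(u\<cdot>x) \<phi>(f(x)) over x whose weight is antiperiodic,
  \<phi>(r + N) = -\<phi>(r), is determined by the same coefficients, so it equals 2^h \<phi>(c). The weights
  (-1)^(r_(k-1)) and (-1)^(r_(k-1) + r_j) turn these sums into the Walsh transforms of a_(k-1) and
  a_(k-1) \<oplus> a_j, whose duals are therefore the bits c_(k-1) and c_(k-1) \<oplus> c_j of c.
\<close>

section \<open>Integer polynomials evaluated at complex numbers\<close>

definition ipoly :: "int poly \<Rightarrow> complex \<Rightarrow> complex" where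
  "ipoly p z = poly (map_poly of_int p) z"

lemma ipoly_pCons [simp]: "ipoly (pCons a p) z = of_int a + z * ipoly p z"
  unfolding ipoly_def by (subst map_poly_pCons) auto

lemma ipoly_0 [simp]: "ipoly 0 z = 0"
  by (simp add: ipoly_def)

lemma ipoly_1 [simp]: "ipoly 1 z = 1"
  by (simp add: ipoly_def)

lemma ipoly_numeral [simp]: "ipoly (numeral n) z = numeral n"
  by (simp add: numeral_poly)

lemma ipoly_add [simp]: "ipoly (p + q) z = ipoly p z + ipoly q z"
proof (induction p arbitrary: q)
  case (pCons a p)
  then show ?case
    by (cases q) (simp add: algebra_simps)
qed simp

lemma ipoly_smult [simp]: "ipoly (smult c p) z = of_int c * ipoly p z"
  by (induction p) (simp_all add: algebra_simps)

lemma ipoly_uminus [simp]: "ipoly (- p) z = - ipoly p z"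
  using ipoly_smult[of "-1" p z] by simp

lemma ipoly_diff [simp]: "ipoly (p - q) z = ipoly p z - ipoly q z"
  using ipoly_add[of p "- q" z] by simp

lemma ipoly_mult [simp]: "ipoly (p * q) z = ipoly p z * ipoly q z"
  by (induction p) (simp_all add: algebra_simps)

lemma ipoly_power [simp]: "ipoly (p ^ n) z = ipoly p z ^ n"
  by (induction n) simp_all

lemma ipoly_sum: "ipoly (sum f A) z = (\<Sum>a\<in>A. ipoly (f a) z)"
  by (induction A rule: infinite_finite_induct) simp_all

lemma ipoly_monom: "ipoly (monom c n) z = of_int c * z ^ n"
  by (simp add: ipoly_def poly_monom map_poly_monom)

lemma ipoly_pcompose: "ipoly (pcompose p q) z = ipoly p (ipoly q z)"
  by (induction p) (simp_all add: pcompose_pCons)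

lemma ipoly_cnj: "ipoly p (cnj z) = cnj (ipoly p z)"
  by (induction p) simp_all

section \<open>Irreducibility of X^(2^m) + 1 over the integers\<close>

lemma eisenstein_criterion_2:
  fixes F G :: "int poly"
  assumes deg: "degree (F * G) = N" and low: "\<forall>i<N. even (coeff (F * G) i)"
    and const: "\<not> 4 dvd coeff (F * G) 0" and lead: "odd (coeff (F * G) N)"
  shows "degree F = 0 \<or> degree G = 0"
proof (rule ccontr)
  assume "\<not> (degree F = 0 \<or> degree G = 0)"
  then have dF: "degree F \<ge> 1" and dG: "degree G \<ge> 1" by auto
  then have "F \<noteq> 0" "G \<noteq> 0" by auto
  then have dsum: "degree F + degree G = N"
    using deg by (simp add: degree_mult_eq)
  then have "coeff (F * G) N = coeff F (degree F) * coeff G (degree G)"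
    using coeff_mult_degree_sum by metis
  then have oF: "odd (coeff F (degree F))" and oG: "odd (coeff G (degree G))"
    using lead by auto
  define a where "a = (LEAST i. odd (coeff F i))"
  define b where "b = (LEAST i. odd (coeff G i))"
  have oa: "odd (coeff F a)" unfolding a_def by (rule LeastI[of _ "degree F"]) (rule oF)
  have ob: "odd (coeff G b)" unfolding b_def by (rule LeastI[of _ "degree G"]) (rule oG)
  have ea: "\<And>i. i < a \<Longrightarrow> even (coeff F i)" and eb: "\<And>i. i < b \<Longrightarrow> even (coeff G i)"
    unfolding a_def b_def using not_less_Least by blast+
  have aF: "a \<le> degree F" and bG: "b \<le> degree G"
    unfolding a_def b_def using oF oG by (auto intro: Least_le)
  \<comment> \<open>the lowest odd coefficients of F and G multiply to the only odd term of coefficient a + b\<close>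
  have "coeff (F * G) (a + b) = coeff F a * coeff G b + (\<Sum>i\<in>{..a+b}-{a}. coeff F i * coeff G (a + b - i))"
    by (simp add: coeff_mult sum.remove[of _ a])
  moreover have "even (\<Sum>i\<in>{..a+b}-{a}. coeff F i * coeff G (a + b - i))"
  proof (rule dvd_sum)
    fix i assume "i \<in> {..a+b}-{a}"
    then have "i < a \<or> a + b - i < b" by auto
    then show "2 dvd coeff F i * coeff G (a + b - i)" using ea eb by auto
  qed
  ultimately have "odd (coeff (F * G) (a + b))" using oa ob by simp
  then have "\<not> a + b < N" using low by auto
  then have "a = degree F" "b = degree G" using aF bG dsum by auto
  then have "even (coeff F 0)" "even (coeff G 0)" using ea eb dF dG by auto
  then have "4 dvd coeff F 0 * coeff G 0" by (auto elim!: evenE)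
  then show False using const by (simp add: coeff_mult_0)
qed

definition X :: "int poly" where "X = [:0, 1:]"

lemma coeff_X_pow: "coeff (X ^ n) i = of_bool (i = n)"
proof -
  have "X ^ n = monom 1 n" unfolding X_def by (simp add: monom_altdef)
  then show ?thesis by (simp add: coeff_monom)
qed

lemma X_minus_1_pow_two_pow: "m \<ge> 1 \<Longrightarrow> \<exists>q. (X - 1) ^ 2 ^ m = X ^ 2 ^ m + 1 + 2 * q"
proof (induction m rule: dec_induct)
  case base
  have "(X - 1) ^ 2 = X ^ 2 + 1 + 2 * (- X)" by (simp add: power2_eq_square algebra_simps)
  then show ?case by auto
next
  case (step m)
  then obtain q where q: "(X - 1) ^ 2 ^ m = X ^ 2 ^ m + 1 + 2 * q" by auto
  have "(X - 1) ^ 2 ^ Suc m = ((X - 1) ^ 2 ^ m) ^ 2"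
    by (simp add: power_mult[symmetric] mult.commute)
  also have "\<dots> = (X ^ 2 ^ m) ^ 2 + 1 + 2 * (X ^ 2 ^ m + 2 * q * X ^ 2 ^ m + 2 * q + 2 * q * q)"
    by (simp add: q power2_eq_square algebra_simps)
  also have "(X ^ 2 ^ m) ^ 2 = X ^ 2 ^ Suc m"
    by (simp add: power_mult[symmetric] mult.commute)
  finally show ?case by blast
qed

lemma pcompose_power: "pcompose (p ^ n) q = pcompose p q ^ n"
  by (induction n) (simp_all add: pcompose_mult pcompose_1)

lemma X_pow_two_pow_plus_1_factors:
  fixes F G :: "int poly"
  assumes m: "m \<ge> 1" and FG: "F * G = X ^ 2 ^ m + 1"
  shows "degree F = 0 \<or> degree G = 0"
proof -
  define Y :: "int poly" where "Y = [:-1, 1:]"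
  have Y: "Y = X - 1" by (simp add: Y_def X_def one_pCons)
  have "pcompose X Y = Y" by (simp add: X_def pcompose_pCons)
  then have FGY: "pcompose F Y * pcompose G Y = Y ^ 2 ^ m + 1"
    by (metis FG pcompose_1 pcompose_add pcompose_mult pcompose_power)
  obtain q where q: "Y ^ 2 ^ m = X ^ 2 ^ m + 1 + 2 * q"
    using X_minus_1_pow_two_pow[OF m] Y by auto
  have coeff: "coeff (Y ^ 2 ^ m + 1) i = of_bool (i = 2 ^ m) + 2 * of_bool (i = 0) + 2 * coeff q i" for i
    unfolding q mult_2 coeff_add coeff_X_pow coeff_1 by simp
  have "degree (Y ^ 2 ^ m + 1) = 2 ^ m"
    by (subst degree_add_eq_left) (simp_all add: Y_def degree_power_eq)
  moreover have "coeff (Y ^ 2 ^ m + 1) 0 = 2"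
    using m by (simp add: Y_def coeff_add[symmetric] poly_0_coeff_0[symmetric])
  moreover have "\<forall>i<2 ^ m. even (coeff (Y ^ 2 ^ m + 1) i)" "odd (coeff (Y ^ 2 ^ m + 1) (2 ^ m))"
    unfolding coeff by auto
  ultimately have "degree (pcompose F Y) = 0 \<or> degree (pcompose G Y) = 0"
    unfolding FGY[symmetric] by (intro eisenstein_criterion_2) simp_all
  then show ?thesis by (simp add: degree_pcompose Y_def)
qed

lemma content_X_pow_plus_1: "N \<ge> 1 \<Longrightarrow> content (X ^ N + 1) = 1"
proof -
  assume "N \<ge> 1"
  then have "content (X ^ N + 1) dvd 1"
    using content_dvd_coeff[of "X ^ N + 1" 0] by (simp add: coeff_X_pow)
  then show ?thesis using normalize_content[of "X ^ N + 1"] by simp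
qed

lemma smult_X_pow_two_pow_plus_1_factors:
  fixes p q :: "int poly"
  assumes m: "m \<ge> 1" and c: "c \<noteq> 0" and pq: "smult c (X ^ 2 ^ m + 1) = p * q"
  shows "degree p = 0 \<or> degree q = 0"
proof -
  define u where "u = unit_factor c"
  have "primitive_part (smult c (X ^ 2 ^ m + 1)) = smult u (X ^ 2 ^ m + 1)"
    by (simp add: u_def primitive_part_smult primitive_part_prim content_X_pow_plus_1)
  then have "smult u (X ^ 2 ^ m + 1) = primitive_part p * primitive_part q"
    using pq by (simp add: primitive_part_mult)
  moreover have "u * u = 1" using c by (simp add: u_def sgn_if)
  ultimately have "smult u (primitive_part p) * primitive_part q = X ^ 2 ^ m + 1"
    by (metis mult_smult_left smult_1_left smult_smult)
  then have "degree (smult u (primitive_part p)) = 0 \<or> degree (primitive_part q) = 0"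
    by (rule X_pow_two_pow_plus_1_factors[OF m])
  then show ?thesis using c by (simp add: u_def sgn_0_0)
qed

section \<open>The ring \<int>[\<zeta>] for a primitive 2^k-th root of unity \<zeta>\<close>

lemma zeta_pow: "zeta k ^ m = cis (real m * (2 * pi / 2 ^ k))"
  unfolding zeta_def by (simp add: DeMoivre)

lemma zeta_pow_half: "k \<ge> 1 \<Longrightarrow> zeta k ^ 2 ^ (k - 1) = -1"
proof -
  assume "k \<ge> 1"
  then have "(2::real) ^ k = 2 * 2 ^ (k - 1)"
    by (metis Suc_diff_1 less_le_trans power_Suc zero_less_one)
  then show ?thesis by (simp add: zeta_pow)
qed

text \<open>Pseudo-dividing X^N + 1, N = 2^(k-1), by a root p of zeta k of least degree leaves a remainder
  that is a root of smaller degree, hence 0; so p divides a multiple of X^N + 1 and, by irreducibility,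
  has degree at least N.\<close>

lemma ipoly_zeta_neq_0:
  assumes k: "k \<ge> 2"
  shows "p \<noteq> 0 \<Longrightarrow> degree p < 2 ^ (k - 1) \<Longrightarrow> ipoly p (zeta k) \<noteq> 0"
proof (induction "degree p" arbitrary: p rule: less_induct)
  case less
  define N :: nat where "N = 2 ^ (k - 1)"
  define E where "E = X ^ N + 1"
  have N1: "N \<ge> 1" and m: "k - 1 \<ge> 1" using k by (simp_all add: N_def)
  have E_root: "ipoly E (zeta k) = 0"
    using zeta_pow_half[of k] k by (simp add: E_def N_def X_def)
  have dE: "degree E = N"
    unfolding E_def using N1 by (subst degree_add_eq_left) (auto simp: X_def degree_power_eq)
  show ?case
  proof
    assume root: "ipoly p (zeta k) = 0"
    have "degree p \<noteq> 0"
    proof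
      assume "degree p = 0"
      then obtain c where "p = [:c:]" by (rule degree_eq_zeroE)
      with root less.prems(1) show False by simp
    qed
    obtain q r where qr: "pseudo_divmod E p = (q, r)" by (cases "pseudo_divmod E p") auto
    define c where "c = coeff p (degree p) ^ (Suc (degree E) - degree p)"
    have c0: "c \<noteq> 0" unfolding c_def using less.prems by simp
    have div: "smult c E = p * q + r" and rdeg: "r = 0 \<or> degree r < degree p"
      using pseudo_divmod[OF less.prems(1) qr] unfolding c_def by auto
    have "ipoly r (zeta k) = 0"
      using arg_cong[OF div, of "\<lambda>t. ipoly t (zeta k)"] root E_root by simp
    then have "r = 0" using rdeg less.hyps less.prems(2) by force
    with div have pq: "smult c E = p * q" by simp
    then have "q \<noteq> 0" using c0 dE N1 by auto
    then have dsum: "degree p + degree q = N"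
      using pq c0 dE less.prems(1) by (metis degree_mult_eq degree_smult_eq)
    have "degree p = 0 \<or> degree q = 0"
      using smult_X_pow_two_pow_plus_1_factors[OF m c0] pq by (simp add: E_def N_def)
    then show False using \<open>degree p \<noteq> 0\<close> dsum less.prems(2) by (auto simp: N_def)
  qed
qed

locale two_power_root =
  fixes k :: nat
  assumes two_le_k: "2 \<le> k"
begin

definition N :: nat where "N = 2 ^ (k - 1)"

abbreviation \<zeta> :: complex where "\<zeta> \<equiv> zeta k"

lemma N_ge_2: "N \<ge> 2"
  using two_le_k power_increasing[of 1 "k - 1" "2::nat"] by (simp add: N_def)

lemma two_pow_k: "(2::nat) ^ k = 2 * N"
proof -
  have "Suc (k - 1) = k" using two_le_k by simp
  then show ?thesis by (metis N_def power_Suc)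
qed

lemma even_N: "even N"
  using two_le_k by (simp add: N_def)

lemma zeta_pow_N: "\<zeta> ^ N = -1"
  using zeta_pow_half two_le_k by (simp add: N_def)

lemma zeta_pow_add_N: "\<zeta> ^ (r + N) = - (\<zeta> ^ r)"
  by (simp add: power_add zeta_pow_N)

lemma zeta_mult_cnj: "\<zeta> * cnj \<zeta> = 1"
  by (simp add: zeta_def cis_cnj cis_mult)

lemma zeta_pow_2N: "\<zeta> ^ (2 * N) = 1"
  by (simp add: mult.commute[of 2] power_mult zeta_pow_N)

lemma zeta_pow_mod: "\<zeta> ^ c = \<zeta> ^ (c mod (2 * N))"
  by (metis (no_types) div_mult_mod_eq power_add power_mult power_one mult_1 zeta_pow_2N mult.commute)

lemma cnj_zeta_pow: "s \<le> 2 * N \<Longrightarrow> cnj \<zeta> ^ s = \<zeta> ^ (2 * N - s)"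
proof -
  assume "s \<le> 2 * N"
  then have "\<zeta> ^ (2 * N - s) * \<zeta> ^ s = 1" by (simp flip: power_add add: zeta_pow_2N)
  moreover have "cnj \<zeta> ^ s * \<zeta> ^ s = 1" using zeta_mult_cnj by (metis mult.commute power_mult_distrib power_one)
  moreover have "\<zeta> ^ s \<noteq> 0" using zeta_mult_cnj by (metis mult_zero_left zero_neq_one power_not_zero)
  ultimately show ?thesis by (metis mult_right_cancel)
qed

definition antiperiodic :: "(nat \<Rightarrow> 'a::ab_group_add) \<Rightarrow> bool" where
  "antiperiodic \<phi> \<longleftrightarrow> (\<forall>r. \<phi> (r + N) = - \<phi> r)"

lemma antiperiodic_zeta_pow: "antiperiodic (\<lambda>r. \<zeta> ^ r)"
  by (simp add: antiperiodic_def zeta_pow_add_N)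

text \<open>The coefficients of \<zeta>^c, for c < 2N, in the basis 1, \<zeta>, ..., \<zeta>^(N-1), as \<zeta>^(r+N) = -\<zeta>^r.\<close>

definition pow_coeffs :: "nat \<Rightarrow> nat \<Rightarrow> int" where
  "pow_coeffs c r = of_bool (c = r) - of_bool (c = r + N)"

lemma antiperiodic_eq_sum_pow_coeffs:
  fixes \<phi> :: "nat \<Rightarrow> 'a::ring_1"
  assumes "antiperiodic \<phi>" and "c < 2 * N"
  shows "\<phi> c = (\<Sum>r<N. of_int (pow_coeffs c r) * \<phi> r)"
proof (cases "c < N")
  case True
  then have "(\<Sum>r<N. of_int (pow_coeffs c r) * \<phi> r) = (\<Sum>r<N. if r = c then \<phi> r else 0)"
    by (intro sum.cong) (auto simp: pow_coeffs_def)
  then show ?thesis using True by simp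
next
  case False
  then have "(\<Sum>r<N. of_int (pow_coeffs c r) * \<phi> r) = (\<Sum>r<N. if r = c - N then - \<phi> r else 0)"
    by (intro sum.cong) (auto simp: pow_coeffs_def)
  also have "\<dots> = - \<phi> (c - N)"
  proof -
    have "c - N < N" using assms(2) by linarith
    then show ?thesis by simp
  qed
  also have "\<dots> = \<phi> c"
    using assms(1) False unfolding antiperiodic_def by (metis le_add_diff_inverse2 minus_minus not_le)
  finally show ?thesis by simp
qed

lemma pow_coeffs_inject:
  assumes "a < 2 * N" "b < 2 * N" and "\<forall>r<N. pow_coeffs a r = pow_coeffs b r"
  shows "a = b"
proof (cases "a < N")
  case True
  then have "pow_coeffs b a = pow_coeffs a a" using assms(3) by simp
  also have "\<dots> = 1" using N_ge_2 by (simp add: pow_coeffs_def)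
  finally show ?thesis by (auto simp: pow_coeffs_def of_bool_def split: if_splits)
next
  case False
  then have "pow_coeffs b (a - N) = pow_coeffs a (a - N)" using assms by simp
  also have "\<dots> = -1" using False N_ge_2 by (simp add: pow_coeffs_def)
  finally show ?thesis using False by (auto simp: pow_coeffs_def of_bool_def split: if_splits)
qed

definition zcomb :: "(nat \<Rightarrow> int) \<Rightarrow> complex" where
  "zcomb m = (\<Sum>r<N. of_int (m r) * \<zeta> ^ r)"

lemma zeta_pow_eq_zcomb: "c < 2 * N \<Longrightarrow> \<zeta> ^ c = zcomb (pow_coeffs c)"
  unfolding zcomb_def by (rule antiperiodic_eq_sum_pow_coeffs[OF antiperiodic_zeta_pow])

lemma zcomb_inject:
  assumes "zcomb m = zcomb m'" and "r < N"
  shows "m r = m' r"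
proof (rule ccontr)
  assume "m r \<noteq> m' r"
  define p where "p = (\<Sum>i<N. monom (m i - m' i) i)"
  have coeff_p: "coeff p i = (if i < N then m i - m' i else 0)" for i
    unfolding p_def by (simp add: coeff_sum coeff_monom)
  have "p \<noteq> 0" using \<open>m r \<noteq> m' r\<close> \<open>r < N\<close> coeff_p by (metis coeff_0 right_minus_eq)
  moreover have "degree p < N"
  proof -
    have "degree p \<le> N - 1" by (rule degree_le) (auto simp: coeff_p)
    then show ?thesis using N_ge_2 by linarith
  qed
  moreover have "ipoly p \<zeta> = 0"
    using assms(1) by (simp add: p_def zcomb_def ipoly_sum ipoly_monom algebra_simps sum_subtractf)
  ultimately show False using ipoly_zeta_neq_0[OF two_le_k] by (simp add: N_def)
qed

lemma zeta_pow_inject: "a < 2 * N \<Longrightarrow> b < 2 * N \<Longrightarrow> \<zeta> ^ a = \<zeta> ^ b \<Longrightarrow> a = b"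
  by (metis pow_coeffs_inject zcomb_inject zeta_pow_eq_zcomb)

lemma zcomb_0 [simp]: "zcomb (\<lambda>r. 0) = 0"
  by (simp add: zcomb_def)

lemma zcomb_add: "zcomb m + zcomb m' = zcomb (\<lambda>r. m r + m' r)"
  by (simp add: zcomb_def sum.distrib algebra_simps)

lemma zcomb_of_int_mult: "of_int c * zcomb m = zcomb (\<lambda>r. c * m r)"
  by (simp add: zcomb_def sum_distrib_left mult.assoc)

lemma zcomb_sum: "(\<Sum>i\<in>A. zcomb (m i)) = zcomb (\<lambda>r. \<Sum>i\<in>A. m i r)"
  by (induction A rule: infinite_finite_induct) (simp_all add: zcomb_add)

lemma of_int_eq_zcomb: "of_int c = zcomb (\<lambda>r. c * pow_coeffs 0 r)"
proof -
  have "\<zeta> ^ 0 = zcomb (pow_coeffs 0)" using N_ge_2 by (intro zeta_pow_eq_zcomb) simp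
  then show ?thesis by (metis power_0 mult_1_right zcomb_of_int_mult)
qed

lemma zeta_mult_zcomb: "\<zeta> * zcomb m = zcomb (\<lambda>r. if r = 0 then - m (N - 1) else m (r - 1))"
proof -
  obtain M where M: "N = Suc M" using N_ge_2 by (metis Suc_pred' less_2_cases_iff not_le zero_less_iff_neq_zero)
  have "\<zeta> * zcomb m = (\<Sum>r<M. of_int (m r) * \<zeta> ^ Suc r) + of_int (m M) * \<zeta> ^ N"
    unfolding zcomb_def M by (simp add: sum_distrib_left algebra_simps)
  also have "\<dots> = zcomb (\<lambda>r. if r = 0 then - m (N - 1) else m (r - 1))"
    using zeta_pow_N unfolding zcomb_def M sum.lessThan_Suc_shift by simp
  finally show ?thesis .
qed

definition Zzeta :: "complex set" where
  "Zzeta = range (\<lambda>p. ipoly p \<zeta>)"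

lemma ipoly_zeta_in_Zzeta [simp]: "ipoly p \<zeta> \<in> Zzeta"
  by (simp add: Zzeta_def)

lemma ZzetaE:
  assumes "z \<in> Zzeta" obtains p where "z = ipoly p \<zeta>"
  using assms by (auto simp: Zzeta_def)

lemma Zzeta_ipoly: "w \<in> Zzeta \<Longrightarrow> ipoly p w \<in> Zzeta"
  by (elim ZzetaE) (simp flip: ipoly_pcompose)

lemma Zzeta_add: "z \<in> Zzeta \<Longrightarrow> w \<in> Zzeta \<Longrightarrow> z + w \<in> Zzeta"
  by (elim ZzetaE) (simp flip: ipoly_add)

lemma Zzeta_diff: "z \<in> Zzeta \<Longrightarrow> w \<in> Zzeta \<Longrightarrow> z - w \<in> Zzeta"
  by (elim ZzetaE) (simp flip: ipoly_diff)

lemma Zzeta_mult: "z \<in> Zzeta \<Longrightarrow> w \<in> Zzeta \<Longrightarrow> z * w \<in> Zzeta"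
  by (elim ZzetaE) (simp flip: ipoly_mult)

lemma Zzeta_of_int [simp]: "of_int c \<in> Zzeta"
  using ipoly_zeta_in_Zzeta[of "[:c:]"] by simp

lemma Zzeta_0 [simp]: "0 \<in> Zzeta" and Zzeta_1 [simp]: "1 \<in> Zzeta"
  and Zzeta_numeral [simp]: "numeral n \<in> Zzeta"
  using Zzeta_of_int[of 0] Zzeta_of_int[of 1] Zzeta_of_int[of "numeral n"] by simp_all

lemma Zzeta_uminus: "z \<in> Zzeta \<Longrightarrow> - z \<in> Zzeta"
  using Zzeta_diff[of 0 z] by simp

lemma Zzeta_zeta [simp]: "\<zeta> \<in> Zzeta"
  using ipoly_zeta_in_Zzeta[of "[:0, 1:]"] by simp

lemma Zzeta_power: "z \<in> Zzeta \<Longrightarrow> z ^ n \<in> Zzeta"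
  using Zzeta_ipoly[of z "[:0, 1:] ^ n"] by simp

lemma Zzeta_sum: "(\<And>a. a \<in> A \<Longrightarrow> f a \<in> Zzeta) \<Longrightarrow> sum f A \<in> Zzeta"
  by (induction A rule: infinite_finite_induct) (simp_all add: Zzeta_add)

lemma Zzeta_cnj: "z \<in> Zzeta \<Longrightarrow> cnj z \<in> Zzeta"
proof -
  assume "z \<in> Zzeta"
  then obtain p where "z = ipoly p \<zeta>" by (rule ZzetaE)
  moreover have "cnj \<zeta> \<in> Zzeta" using cnj_zeta_pow[of 1] N_ge_2 by (simp add: Zzeta_power)
  ultimately show ?thesis by (simp add: Zzeta_ipoly flip: ipoly_cnj)
qed

lemmas Zzeta_intros = Zzeta_add Zzeta_diff Zzeta_uminus Zzeta_mult Zzeta_power Zzeta_sum Zzeta_cnj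

lemma zcomb_in_Zzeta [simp]: "zcomb m \<in> Zzeta"
  unfolding zcomb_def by (intro Zzeta_intros) simp_all

lemma Zzeta_eq_range_zcomb: "Zzeta = range zcomb"
proof -
  have "\<exists>m. ipoly p \<zeta> = zcomb m" for p
  proof (induction p)
    case 0
    then show ?case by (metis ipoly_0 zcomb_0)
  next
    case (pCons a p)
    then obtain m where "ipoly p \<zeta> = zcomb m" by blast
    then show ?case by (metis ipoly_pCons of_int_eq_zcomb zcomb_add zeta_mult_zcomb)
  qed
  then show ?thesis by (auto elim!: ZzetaE)
qed

lemma half_notin_Zzeta: "\<not> (\<exists>v\<in>Zzeta. 2 * v = 1)"
proof
  assume "\<exists>v\<in>Zzeta. 2 * v = 1"
  then obtain m where "2 * zcomb m = 1" by (auto simp: Zzeta_eq_range_zcomb)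
  then have "zcomb (\<lambda>r. 2 * m r) = zcomb (\<lambda>r. 1 * pow_coeffs 0 r)"
    using zcomb_of_int_mult[of 2 m] of_int_eq_zcomb[of 1] by simp
  then have "2 * m 0 = 1 * pow_coeffs 0 0" using zcomb_inject N_ge_2 by fastforce
  then have "2 * m 0 = 1" using N_ge_2 by (simp add: pow_coeffs_def)
  then show False by presburger
qed

section \<open>The prime 1 - \<zeta> and elements of norm a power of 2\<close>

definition pi_zeta :: complex where
  "pi_zeta = 1 - \<zeta>"

lemma pi_zeta_in_Zzeta [simp]: "pi_zeta \<in> Zzeta"
  by (simp add: pi_zeta_def Zzeta_diff)

lemma two_eq_pi_zeta_mult: "2 = pi_zeta * (\<Sum>i<N. \<zeta> ^ i)"
  using one_diff_power_eq[of \<zeta> N] by (simp add: pi_zeta_def zeta_pow_N)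

lemma pi_zeta_neq_0: "pi_zeta \<noteq> 0"
  using two_eq_pi_zeta_mult by auto

lemma cnj_pi_zeta: "cnj pi_zeta = pi_zeta * - cnj \<zeta>"
  using zeta_mult_cnj by (simp add: pi_zeta_def algebra_simps)

lemma ipoly_zeta_mod_pi_zeta: "\<exists>w\<in>Zzeta. ipoly p \<zeta> = of_int (poly p 1) + pi_zeta * w"
proof (induction p)
  case 0
  then show ?case by (auto intro: bexI[of _ 0])
next
  case (pCons a p)
  then obtain w where w: "w \<in> Zzeta" "ipoly p \<zeta> = of_int (poly p 1) + pi_zeta * w" by blast
  have "ipoly (pCons a p) \<zeta> = of_int (poly (pCons a p) 1) + pi_zeta * (\<zeta> * w - of_int (poly p 1))"
    by (simp add: w(2) pi_zeta_def algebra_simps)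
  moreover have "\<zeta> * w - of_int (poly p 1) \<in> Zzeta" using w(1) by (intro Zzeta_intros) simp_all
  ultimately show ?case by blast
qed

lemma Zzeta_mod_pi_zeta: "z \<in> Zzeta \<Longrightarrow> \<exists>b. \<exists>w\<in>Zzeta. z = of_bool b + pi_zeta * w"
proof -
  assume "z \<in> Zzeta"
  then obtain p where "z = ipoly p \<zeta>" by (rule ZzetaE)
  with ipoly_zeta_mod_pi_zeta obtain w where w: "w \<in> Zzeta" "z = of_int (poly p 1) + pi_zeta * w"
    by blast
  obtain t where t: "poly p 1 = 2 * t + of_bool (odd (poly p 1))"
    by (metis add.right_neutral evenE oddE of_bool_eq(1) of_bool_eq(2))
  have "z = of_bool (odd (poly p 1)) + pi_zeta * ((\<Sum>i<N. \<zeta> ^ i) * of_int t + w)"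
    using w(2) two_eq_pi_zeta_mult by (subst (asm) t) (simp add: algebra_simps)
  moreover have "(\<Sum>i<N. \<zeta> ^ i) * of_int t + w \<in> Zzeta" using w(1) by (intro Zzeta_intros) simp_all
  ultimately show ?thesis by blast
qed

text \<open>Evaluate (X - 1)^N = X^N + 1 + 2q at pi_zeta, where pi_zeta - 1 = -\<zeta>; q has no constant term.\<close>

lemma pi_zeta_pow_N_eq: "\<exists>t\<in>Zzeta. pi_zeta ^ N = - 2 * (1 + pi_zeta * t)"
proof -
  have "k - 1 \<ge> 1" using two_le_k by simp
  then obtain q where q: "(X - 1) ^ N = X ^ N + 1 + 2 * q"
    using X_minus_1_pow_two_pow unfolding N_def by blast
  have "poly ((X - 1) ^ N) 0 = poly (X ^ N + 1 + 2 * q) (0::int)" by (simp only: q)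
  then have "poly q 0 = 0" using even_N N_ge_2 by (simp add: X_def zero_power)
  then obtain q' where q': "q = pCons 0 q'" by (metis pCons_cases poly_pCons mult_zero_left add_0_right)
  have "ipoly (X - 1) pi_zeta = - \<zeta>" by (simp add: X_def pi_zeta_def)
  then have "-1 = ipoly ((X - 1) ^ N) pi_zeta" using even_N by (simp add: zeta_pow_N)
  also have "\<dots> = pi_zeta ^ N + 1 + 2 * (pi_zeta * ipoly q' pi_zeta)"
    by (simp only: q) (simp add: q' X_def)
  finally have "pi_zeta ^ N = - 2 * (1 + pi_zeta * ipoly q' pi_zeta)"
    by (simp add: algebra_simps eq_neg_iff_add_eq_0)
  then show ?thesis using Zzeta_ipoly[OF pi_zeta_in_Zzeta] by blast
qed

lemma pi_zeta_pow_N_eq_two_mult: "\<exists>a\<in>Zzeta. pi_zeta ^ N = 2 * a"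
proof -
  obtain t where "t \<in> Zzeta" "pi_zeta ^ N = - 2 * (1 + pi_zeta * t)" using pi_zeta_pow_N_eq by blast
  then show ?thesis by (intro bexI[of _ "- (1 + pi_zeta * t)"]) (simp_all add: Zzeta_intros)
qed

text \<open>With pi_zeta ^ N = -2 u for u = 1 + pi_zeta t, u is a unit: the geometric sum for
  -pi_zeta t inverts u up to (pi_zeta t)^N, which is again a multiple of 2 u.\<close>

lemma two_eq_pi_zeta_pow_N_mult: "\<exists>b\<in>Zzeta. 2 = pi_zeta ^ N * b"
proof -
  obtain t where t: "t \<in> Zzeta" "pi_zeta ^ N = - 2 * (1 + pi_zeta * t)" using pi_zeta_pow_N_eq by blast
  define S where "S = (\<Sum>i<N. (- pi_zeta * t) ^ i)"
  have geometric: "(1 + pi_zeta * t) * S = 1 - (- pi_zeta * t) ^ N"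
    using one_diff_power_eq[of "- pi_zeta * t" N] by (simp add: S_def)
  have power_N: "(- pi_zeta * t) ^ N = - 2 * (1 + pi_zeta * t) * t ^ N"
    using even_N by (simp add: power_mult_distrib t(2))
  have "pi_zeta ^ N * (2 * t ^ N - S) = 2 * ((1 + pi_zeta * t) * S) - 4 * (1 + pi_zeta * t) * t ^ N"
    by (simp add: t(2) algebra_simps)
  also have "\<dots> = 2"
    unfolding geometric power_N by (simp add: algebra_simps)
  finally have "2 = pi_zeta ^ N * (2 * t ^ N - S)" by simp
  moreover have "2 * t ^ N - S \<in> Zzeta"
    using t(1) unfolding S_def by (intro Zzeta_intros) simp_all
  ultimately show ?thesis by blast
qed

lemma pi_zeta_not_unit: "\<not> (\<exists>w\<in>Zzeta. pi_zeta * w = 1)"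
proof
  assume "\<exists>w\<in>Zzeta. pi_zeta * w = 1"
  then obtain w where w: "w \<in> Zzeta" "pi_zeta * w = 1" by blast
  obtain a where a: "a \<in> Zzeta" "pi_zeta ^ N = 2 * a" using pi_zeta_pow_N_eq_two_mult by blast
  have "2 * (a * w ^ N) = (pi_zeta * w) ^ N" by (simp add: a(2) power_mult_distrib)
  then have "2 * (a * w ^ N) = 1" using w(2) by simp
  moreover have "a * w ^ N \<in> Zzeta" using a(1) w(1) by (intro Zzeta_intros)
  ultimately show False using half_notin_Zzeta by blast
qed

text \<open>The residue field of pi_zeta is F_2: a unit residue of z forces z * cnj z to be a unit residue.\<close>

lemma pi_zeta_dvd_of_dvd_norm:
  assumes z: "z \<in> Zzeta" and w: "w \<in> Zzeta" and norm: "z * cnj z = pi_zeta * w"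
  shows "\<exists>v\<in>Zzeta. z = pi_zeta * v"
proof -
  obtain b y where y: "y \<in> Zzeta" "z = of_bool b + pi_zeta * y"
    using Zzeta_mod_pi_zeta[OF z] by blast
  show ?thesis
  proof (cases b)
    case False
    then show ?thesis using y by auto
  next
    case True
    define y' where "y' = - cnj \<zeta> * cnj y"
    have "cnj z = 1 + pi_zeta * y'" using y True by (simp add: y'_def cnj_pi_zeta)
    then have "z * cnj z = 1 + pi_zeta * (y + y' + pi_zeta * y * y')"
      using y True by (simp add: algebra_simps)
    then have "pi_zeta * (w - (y + y' + pi_zeta * y * y')) = 1"
      using norm by (simp add: algebra_simps)
    moreover have "w - (y + y' + pi_zeta * y * y') \<in> Zzeta"
      using y(1) w unfolding y'_def by (intro Zzeta_intros) simp_all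
    ultimately show ?thesis using pi_zeta_not_unit by blast
  qed
qed

lemma pi_zeta_pow_dvd_of_dvd_norm:
  "z \<in> Zzeta \<Longrightarrow> w \<in> Zzeta \<Longrightarrow> z * cnj z = pi_zeta ^ (2 * b) * w \<Longrightarrow> \<exists>v\<in>Zzeta. z = pi_zeta ^ b * v"
proof (induction b arbitrary: z w)
  case 0
  then show ?case by auto
next
  case (Suc b)
  have "z * cnj z = pi_zeta * (pi_zeta * pi_zeta ^ (2 * b) * w)"
    using Suc.prems(3) by (simp add: mult.assoc)
  moreover have "pi_zeta * pi_zeta ^ (2 * b) * w \<in> Zzeta"
    using Suc.prems(2) by (intro Zzeta_intros) simp_all
  ultimately obtain v where v: "v \<in> Zzeta" "z = pi_zeta * v"
    using pi_zeta_dvd_of_dvd_norm[OF Suc.prems(1)] by blast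
  have "pi_zeta * pi_zeta * (- cnj \<zeta> * v * cnj v) = pi_zeta * pi_zeta * (pi_zeta ^ (2 * b) * w)"
    using Suc.prems(3) v(2) by (simp add: cnj_pi_zeta algebra_simps)
  then have "- cnj \<zeta> * v * cnj v = pi_zeta ^ (2 * b) * w"
    using pi_zeta_neq_0 by (metis mult_cancel_left mult_eq_0_iff)
  then have "\<zeta> * (- cnj \<zeta> * v * cnj v) = pi_zeta ^ (2 * b) * (\<zeta> * w)"
    by (simp add: algebra_simps)
  then have "v * cnj v = pi_zeta ^ (2 * b) * (- \<zeta> * w)"
    using zeta_mult_cnj by (simp add: algebra_simps minus_equation_iff[of "v * cnj v"])
  moreover have "- \<zeta> * w \<in> Zzeta" using Suc.prems(2) by (intro Zzeta_intros) simp_all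
  ultimately obtain v' where "v' \<in> Zzeta" "v = pi_zeta ^ b * v'" using Suc.IH[OF v(1)] by blast
  then show ?case using v(2) by auto
qed

lemma sum_squares_int_eq_1:
  fixes e :: "'a \<Rightarrow> int"
  assumes "finite A" and "(\<Sum>r\<in>A. (e r)\<^sup>2) = 1"
  shows "\<exists>s\<in>A. (e s = 1 \<or> e s = -1) \<and> (\<forall>r\<in>A. r \<noteq> s \<longrightarrow> e r = 0)"
proof -
  have "\<exists>s\<in>A. e s \<noteq> 0"
  proof (rule ccontr)
    assume "\<not> (\<exists>s\<in>A. e s \<noteq> 0)"
    then have "(\<Sum>r\<in>A. (e r)\<^sup>2) = 0" by simp
    with assms(2) show False by simp
  qed
  then obtain s where s: "s \<in> A" "e s \<noteq> 0" by blast
  have split: "(\<Sum>r\<in>A. (e r)\<^sup>2) = (e s)\<^sup>2 + (\<Sum>r\<in>A-{s}. (e r)\<^sup>2)"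
    using assms(1) s(1) by (simp add: sum.remove)
  have "(e s)\<^sup>2 > 0" using s(2) by simp
  moreover have "(\<Sum>r\<in>A-{s}. (e r)\<^sup>2) \<ge> 0" by (simp add: sum_nonneg)
  ultimately have "(e s)\<^sup>2 = 1" "(\<Sum>r\<in>A-{s}. (e r)\<^sup>2) = 0" using split assms(2) by linarith+
  then show ?thesis using assms(1) s(1) by (auto simp: power2_eq_1_iff sum_nonneg_eq_0_iff)
qed

text \<open>The constant coefficient of \<zeta>^r * cnj (\<zeta>^s) is [r = s] for r, s < N, so that of
  w * cnj w, w = \<Sum> e_r \<zeta>^r, is \<Sum> e_r^2.\<close>

lemma sum_squares_eq_1_of_unimodular:
  assumes "zcomb e * cnj (zcomb e) = 1"
  shows "(\<Sum>r<N. (e r)\<^sup>2) = 1"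
proof -
  define d where "d r s = (r + (2 * N - s)) mod (2 * N)" for r s
  have "\<zeta> ^ r * cnj (\<zeta> ^ s) = zcomb (pow_coeffs (d r s))" if "s < N" for r s
  proof -
    have "\<zeta> ^ r * cnj (\<zeta> ^ s) = \<zeta> ^ d r s"
      using that unfolding d_def by (simp add: cnj_zeta_pow flip: power_add) (rule zeta_pow_mod)
    also have "\<dots> = zcomb (pow_coeffs (d r s))"
      using N_ge_2 by (simp add: d_def zeta_pow_eq_zcomb)
    finally show ?thesis .
  qed
  then have "zcomb e * cnj (zcomb e) = (\<Sum>r<N. \<Sum>s<N. zcomb (\<lambda>t. e r * e s * pow_coeffs (d r s) t))"
    unfolding zcomb_def[of e] by (simp add: sum_product algebra_simps flip: zcomb_of_int_mult)
  also have "\<dots> = zcomb (\<lambda>t. \<Sum>r<N. \<Sum>s<N. e r * e s * pow_coeffs (d r s) t)"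
    by (simp add: zcomb_sum)
  finally have "zcomb (\<lambda>t. \<Sum>r<N. \<Sum>s<N. e r * e s * pow_coeffs (d r s) t) = zcomb (\<lambda>t. 1 * pow_coeffs 0 t)"
    using assms of_int_eq_zcomb[of 1] by simp
  from zcomb_inject[OF this, of 0] have "(\<Sum>r<N. \<Sum>s<N. e r * e s * pow_coeffs (d r s) 0) = 1"
    using N_ge_2 by (simp add: pow_coeffs_def)
  moreover have "(\<Sum>s<N. e r * e s * pow_coeffs (d r s) 0) = (e r)\<^sup>2" if "r < N" for r
  proof -
    have "pow_coeffs (d r s) 0 = of_bool (s = r)" if "s < N" for s
      using that \<open>r < N\<close> by (auto simp: d_def pow_coeffs_def mod_if)
    then have "(\<Sum>s<N. e r * e s * pow_coeffs (d r s) 0) = (\<Sum>s<N. if s = r then e r * e s else 0)"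
      by (intro sum.cong) auto
    then show ?thesis using that by (simp add: power2_eq_square)
  qed
  ultimately show ?thesis by simp
qed

lemma Zzeta_unimodular:
  assumes "w \<in> Zzeta" and "w * cnj w = 1"
  shows "\<exists>c<2 * N. w = \<zeta> ^ c"
proof -
  obtain e where w: "w = zcomb e" using assms(1) by (auto simp: Zzeta_eq_range_zcomb)
  then obtain s where s: "s < N" "e s = 1 \<or> e s = -1" "\<forall>r<N. r \<noteq> s \<longrightarrow> e r = 0"
    using sum_squares_int_eq_1[of "{..<N}" e] sum_squares_eq_1_of_unimodular assms(2) by auto
  have "w = (\<Sum>r<N. if r = s then of_int (e s) * \<zeta> ^ s else 0)"
    unfolding w zcomb_def using s(3) by (intro sum.cong) auto
  then have "w = of_int (e s) * \<zeta> ^ s" using s(1) by simp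
  then have "w = \<zeta> ^ s \<or> w = \<zeta> ^ (s + N)" using s(2) by (auto simp: zeta_pow_add_N)
  moreover have "s < 2 * N" "s + N < 2 * N" using s(1) by simp_all
  ultimately show ?thesis by blast
qed

lemma Zzeta_norm_eq_two_pow:
  assumes "z \<in> Zzeta" and norm: "z * cnj z = 2 ^ (2 * h)"
  shows "\<exists>c<2 * N. z = 2 ^ h * \<zeta> ^ c"
proof -
  obtain b where b: "b \<in> Zzeta" "2 = pi_zeta ^ N * b" using two_eq_pi_zeta_pow_N_mult by blast
  have "z * cnj z = pi_zeta ^ (2 * (h * N)) * b ^ (2 * h)"
    unfolding norm by (subst b(2)) (simp add: power_mult_distrib ac_simps flip: power_mult)
  then obtain v where v: "v \<in> Zzeta" "z = pi_zeta ^ (h * N) * v"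
    using pi_zeta_pow_dvd_of_dvd_norm[OF assms(1)] b(1) by (meson Zzeta_power)
  obtain a where a: "a \<in> Zzeta" "pi_zeta ^ N = 2 * a" using pi_zeta_pow_N_eq_two_mult by blast
  define w where "w = a ^ h * v"
  have z: "z = 2 ^ h * w"
    unfolding w_def v(2) by (simp add: mult.commute[of h] power_mult a(2) power_mult_distrib)
  have "(2::complex) ^ (2 * h) = 2 ^ h * 2 ^ h" by (simp add: mult_2 power_add)
  moreover have "z * cnj z = 2 ^ h * 2 ^ h * (w * cnj w)"
    unfolding z by (simp add: algebra_simps)
  ultimately have "w * cnj w = 1" using norm by simp
  moreover have "w \<in> Zzeta" using a(1) v(1) unfolding w_def by (intro Zzeta_intros)
  ultimately obtain c where "c < 2 * N" "w = \<zeta> ^ c" using Zzeta_unimodular by blast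
  then show ?thesis using z by blast
qed

end

section \<open>Walsh sums of gbent functions\<close>

lemma sqrt_two_pow_even: "even n \<Longrightarrow> sqrt (2 ^ n) = 2 ^ (n div 2)"
  by (elim evenE) (simp add: power_even_eq)

lemma bdual_eqI:
  assumes "walsh n g u = sqrt (2 ^ n) * (-1) ^ of_bool b"
  shows "bdual n g u = b"
  unfolding bdual_def
proof (rule the_equality)
  fix b' assume "walsh n g u = sqrt (2 ^ n) * (-1) ^ of_bool b'"
  then have "(-1::real) ^ of_bool b' = (-1) ^ of_bool b" using assms by simp
  then show "b' = b" by (cases b; cases b') simp_all
qed (rule assms)

lemma sum_bits_eq_horner_sum:
  "(\<Sum>i<k. 2 ^ i * of_bool (b i)) = (horner_sum of_bool 2 (map b [0..<k]) :: nat)"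
  by (simp add: horner_sum_eq_sum atLeast0LessThan mult.commute)

lemma sum_bits_less: "(\<Sum>i<k. 2 ^ i * of_bool (b i)) < (2 ^ k :: nat)"
  using horner_sum_bound[of "map b [0..<k]"] by (simp add: sum_bits_eq_horner_sum)

lemma bit_sum_bits: "j < k \<Longrightarrow> bit (\<Sum>i<k. 2 ^ i * of_bool (b i) :: nat) j = b j"
  by (simp add: sum_bits_eq_horner_sum bit_horner_sum_bit_iff)

lemma sum_bits_of_less: "(c::nat) < 2 ^ k \<Longrightarrow> (\<Sum>i<k. 2 ^ i * of_bool (bit c i)) = c"
  by (simp add: sum_bits_eq_horner_sum horner_sum_bit_eq_take_bit take_bit_nat_eq_self)

lemma bit_add_two_pow:
  fixes r :: nat
  assumes "j \<le> m"
  shows "bit (r + 2 ^ m) j = (if j = m then \<not> bit r j else bit r j)"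
proof -
  have "(2::nat) ^ m = 2 ^ (m - j) * 2 ^ j"
    using assms by (simp flip: power_add)
  then have "(r + 2 ^ m) div 2 ^ j = r div 2 ^ j + 2 ^ (m - j)"
    by simp
  then show ?thesis using assms by (simp add: bit_iff_odd)
qed

context two_power_root
begin

lemma antiperiodic_sum_eq:
  fixes \<phi> :: "nat \<Rightarrow> 'a::comm_ring_1"
  assumes "antiperiodic \<phi>" and "\<forall>x\<in>V. f x < 2 * N"
  shows "(\<Sum>x\<in>V. \<phi> (f x) * of_int (s x)) = (\<Sum>r<N. of_int (\<Sum>x\<in>V. s x * pow_coeffs (f x) r) * \<phi> r)"
proof -
  have "(\<Sum>x\<in>V. \<phi> (f x) * of_int (s x)) = (\<Sum>x\<in>V. \<Sum>r<N. of_int (s x * pow_coeffs (f x) r) * \<phi> r)"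
  proof (intro sum.cong refl)
    fix x assume "x \<in> V"
    then have expand: "\<phi> (f x) = (\<Sum>r<N. of_int (pow_coeffs (f x) r) * \<phi> r)"
      using assms by (intro antiperiodic_eq_sum_pow_coeffs) auto
    show "\<phi> (f x) * of_int (s x) = (\<Sum>r<N. of_int (s x * pow_coeffs (f x) r) * \<phi> r)"
      unfolding expand sum_distrib_right by (simp add: ac_simps)
  qed
  also have "\<dots> = (\<Sum>r<N. of_int (\<Sum>x\<in>V. s x * pow_coeffs (f x) r) * \<phi> r)"
    by (subst sum.swap) (simp add: sum_distrib_right)
  finally show ?thesis .
qed

text \<open>The coefficients of the exponential sum in the basis 1, ..., \<zeta>^(N-1) are those of 2^h \<zeta>^c,
  and every sum with an antiperiodic weight is the same linear form in these coefficients.\<close>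

lemma antiperiodic_sums_of_norm:
  assumes f: "\<forall>x\<in>V. f x < 2 * N"
    and norm: "(\<Sum>x\<in>V. \<zeta> ^ f x * of_int (s x)) * cnj (\<Sum>x\<in>V. \<zeta> ^ f x * of_int (s x)) = 2 ^ (2 * h)"
  obtains c where "c < 2 * N"
    and "\<And>\<phi> :: nat \<Rightarrow> complex. antiperiodic \<phi> \<Longrightarrow> (\<Sum>x\<in>V. \<phi> (f x) * of_int (s x)) = 2 ^ h * \<phi> c"
proof -
  define D where "D r = (\<Sum>x\<in>V. s x * pow_coeffs (f x) r)" for r
  have sums: "(\<Sum>x\<in>V. \<phi> (f x) * of_int (s x)) = (\<Sum>r<N. of_int (D r) * \<phi> r)"
    if "antiperiodic \<phi>" for \<phi> :: "nat \<Rightarrow> complex"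
    unfolding D_def by (rule antiperiodic_sum_eq[OF that f])
  then have "(\<Sum>x\<in>V. \<zeta> ^ f x * of_int (s x)) = zcomb D"
    using antiperiodic_zeta_pow by (simp add: zcomb_def)
  then obtain c where c: "c < 2 * N" "zcomb D = 2 ^ h * \<zeta> ^ c"
    using Zzeta_norm_eq_two_pow[of "zcomb D" h] norm by auto
  then have "zcomb D = zcomb (\<lambda>r. 2 ^ h * pow_coeffs c r)"
    using zcomb_of_int_mult[of "2 ^ h" "pow_coeffs c"] by (simp add: zeta_pow_eq_zcomb)
  then have D: "D r = 2 ^ h * pow_coeffs c r" if "r < N" for r
    using zcomb_inject that by blast
  show thesis
  proof (rule that[OF c(1)])
    fix \<phi> :: "nat \<Rightarrow> complex" assume \<phi>: "antiperiodic \<phi>"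
    have "(\<Sum>x\<in>V. \<phi> (f x) * of_int (s x)) = (\<Sum>r<N. 2 ^ h * (of_int (pow_coeffs c r) * \<phi> r))"
      unfolding sums[OF \<phi>] by (intro sum.cong) (simp_all add: D)
    also have "\<dots> = 2 ^ h * \<phi> c"
      by (simp add: antiperiodic_eq_sum_pow_coeffs[OF \<phi> c(1)] sum_distrib_left)
    finally show "(\<Sum>x\<in>V. \<phi> (f x) * of_int (s x)) = 2 ^ h * \<phi> c" .
  qed
qed

lemma gbent_antiperiodic_sums:
  assumes "even n" and gbent: "gbent n k f" and u: "u \<in> Vn n" and f: "\<forall>x\<in>Vn n. f x < 2 ^ k"
  obtains c where "c < 2 ^ k"
    and "\<And>\<phi> :: nat \<Rightarrow> complex. antiperiodic \<phi> \<Longrightarrow>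
           (\<Sum>x\<in>Vn n. \<phi> (f x) * (-1) ^ ip n u x) = sqrt (2 ^ n) * \<phi> c"
proof -
  define s :: "bool list \<Rightarrow> int" where "s x = (-1) ^ ip n u x" for x
  have "gH n k f u = (\<Sum>x\<in>Vn n. \<zeta> ^ f x * of_int (s x))"
    by (simp add: gH_def s_def)
  moreover have "gH n k f u * cnj (gH n k f u) = 2 ^ (2 * (n div 2))"
    using gbent u \<open>even n\<close> by (simp add: gbent_def complex_norm_square[symmetric])
  ultimately obtain c where "c < 2 * N"
    and "\<And>\<phi> :: nat \<Rightarrow> complex. antiperiodic \<phi> \<Longrightarrow>
           (\<Sum>x\<in>Vn n. \<phi> (f x) * of_int (s x)) = 2 ^ (n div 2) * \<phi> c"
    using antiperiodic_sums_of_norm[of "Vn n" f s "n div 2"] f two_pow_k by auto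
  then show thesis
    using that two_pow_k sqrt_two_pow_even[OF \<open>even n\<close>] by (simp add: s_def)
qed

lemma gdual_eqI:
  assumes "c < 2 ^ k" and "gH n k f u = sqrt (2 ^ n) * \<zeta> ^ c"
  shows "gdual n k f u = c"
  unfolding gdual_def
proof (rule the_equality)
  show "c < 2 ^ k \<and> gH n k f u = sqrt (2 ^ n) * \<zeta> ^ c" using assms by simp
next
  fix c' assume "c' < 2 ^ k \<and> gH n k f u = sqrt (2 ^ n) * \<zeta> ^ c'"
  then have "c' < 2 * N" "\<zeta> ^ c' = \<zeta> ^ c" using assms by (simp_all add: two_pow_k)
  then show "c' = c" using assms(1) zeta_pow_inject two_pow_k by simp
qed

lemma bdual_eq_of_antiperiodic_sums:
  assumes sums: "\<And>\<phi> :: nat \<Rightarrow> complex. antiperiodic \<phi> \<Longrightarrow>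
           (\<Sum>x\<in>Vn n. \<phi> (f x) * (-1) ^ ip n u x) = sqrt (2 ^ n) * \<phi> c"
    and Q: "\<And>r. Q (r + N) = (\<not> Q r)"
  shows "bdual n (\<lambda>x. Q (f x)) u = Q c"
proof (rule bdual_eqI)
  define \<phi> :: "nat \<Rightarrow> complex" where "\<phi> r = (-1) ^ of_bool (Q r)" for r
  have "antiperiodic \<phi>" by (simp add: antiperiodic_def \<phi>_def Q)
  have "complex_of_real (walsh n (\<lambda>x. Q (f x)) u) = (\<Sum>x\<in>Vn n. \<phi> (f x) * (-1) ^ ip n u x)"
    by (simp add: walsh_def \<phi>_def power_add)
  also have "\<dots> = sqrt (2 ^ n) * \<phi> c"
    by (rule sums[OF \<open>antiperiodic \<phi>\<close>])
  also have "\<dots> = complex_of_real (sqrt (2 ^ n) * (-1) ^ of_bool (Q c))"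
    by (simp add: \<phi>_def)
  finally show "walsh n (\<lambda>x. Q (f x)) u = sqrt (2 ^ n) * (-1) ^ of_bool (Q c)"
    using of_real_eq_iff by blast
qed

lemma bdual_bits_of_antiperiodic_sums:
  assumes sums: "\<And>\<phi> :: nat \<Rightarrow> complex. antiperiodic \<phi> \<Longrightarrow>
           (\<Sum>x\<in>Vn n. \<phi> (f x) * (-1) ^ ip n u x) = sqrt (2 ^ n) * \<phi> c"
  shows "bdual n (\<lambda>x. bit (f x) (k - 1)) u = bit c (k - 1)"
    and "j < k - 1 \<Longrightarrow> bdual n (\<lambda>x. bit (f x) (k - 1) \<noteq> bit (f x) j) u = (bit c (k - 1) \<noteq> bit c j)"
  using bdual_eq_of_antiperiodic_sums[OF sums, where Q = "\<lambda>r. bit r (k - 1)"]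
    bdual_eq_of_antiperiodic_sums[OF sums, where Q = "\<lambda>r. bit r (k - 1) \<noteq> bit r j"]
  by (simp_all add: N_def bit_add_two_pow)

end

theorem theorem5:
  fixes n k :: nat and a :: "nat \<Rightarrow> bool list \<Rightarrow> bool"
  assumes "even n" and "k \<ge> 2"
    and "gbent n k (\<lambda>x. \<Sum>i<k. 2 ^ i * of_bool (a i x))"
  shows "\<forall>u\<in>Vn n.
     gdual n k (\<lambda>x. \<Sum>i<k. 2 ^ i * of_bool (a i x)) u =
       (\<Sum>j<k - 1. 2 ^ j * of_bool (bdual n (a (k - 1)) u \<noteq> bdual n (\<lambda>x. a (k - 1) x \<noteq> a j x) u))
       + 2 ^ (k - 1) * of_bool (bdual n (a (k - 1)) u)"
proof
  fix u assume u: "u \<in> Vn n"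
  interpret two_power_root k using assms(2) by unfold_locales
  define f :: "bool list \<Rightarrow> nat" where "f = (\<lambda>x. \<Sum>i<k. 2 ^ i * of_bool (a i x))"
  have bits: "a i = (\<lambda>x. bit (f x) i)" if "i < k" for i
    unfolding f_def using bit_sum_bits[OF that] by simp
  have "\<forall>x\<in>Vn n. f x < 2 ^ k" unfolding f_def by (intro ballI sum_bits_less)
  then obtain c where c: "c < 2 ^ k"
    and sums: "\<And>\<phi> :: nat \<Rightarrow> complex. antiperiodic \<phi> \<Longrightarrow>
                 (\<Sum>x\<in>Vn n. \<phi> (f x) * (-1) ^ ip n u x) = sqrt (2 ^ n) * \<phi> c"
    using gbent_antiperiodic_sums[OF assms(1) assms(3)[folded f_def] u] by blast
  have "gdual n k (\<lambda>x. \<Sum>i<k. 2 ^ i * of_bool (a i x)) u = c"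
    using sums[OF antiperiodic_zeta_pow] c unfolding f_def
    by (intro gdual_eqI) (simp_all add: gH_def mult.commute)
  also have "c = (\<Sum>j<k - 1. 2 ^ j * of_bool (bit c j)) + 2 ^ (k - 1) * of_bool (bit c (k - 1))"
    using sum_bits_of_less[OF c] assms(2) by (metis Suc_diff_1 less_le_trans pos2 sum.lessThan_Suc)
  also have "\<dots> = (\<Sum>j<k - 1. 2 ^ j * of_bool (bdual n (a (k - 1)) u \<noteq> bdual n (\<lambda>x. a (k - 1) x \<noteq> a j x) u))
       + 2 ^ (k - 1) * of_bool (bdual n (a (k - 1)) u)"
    using bdual_bits_of_antiperiodic_sums[where f = f, OF sums] assms(2)
    by (intro arg_cong2[where f = "(+)"] sum.cong) (simp_all add: bits)
  finally show "gdual n k (\<lambda>x. \<Sum>i<k. 2 ^ i * of_bool (a i x)) u =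
       (\<Sum>j<k - 1. 2 ^ j * of_bool (bdual n (a (k - 1)) u \<noteq> bdual n (\<lambda>x. a (k - 1) x \<noteq> a j x) u))
       + 2 ^ (k - 1) * of_bool (bdual n (a (k - 1)) u)" .
qed

end
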